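(* Let $F$ be $(\ell,\omega)$-relatively smooth on $\mathcal X\cap\mathcal S$ and suppose that $(x,y)\mapsto\sqrt{D^{\mathrm{sym}}_\omega(x,y)}$ is a metric. Then for any $x\in\mathcal X\cap\mathcal S$ and any $\rho,s>0$ with $\rho>\ell/s+2\ell$, $$\frac{\Delta_\rho(x)}{C(\ell,\rho,s)}\le\Delta^+_\rho(x)\le C(\ell,\rho,s)\,\Delta_\rho(x),\qquad C(\ell,\rho,s):=\frac{(1+s)(\rho-\ell)+(1+s^{-1})\ell}{\rho-\ell-(1+s^{-1})\ell}.$$ In particular, for $s=1$, $\rho=4\ell$ one has $C(\ell,\rho,s)=8$ and $\frac18\Delta_{4\ell}(x)\le\Delta^+_{4\ell}(x)\le8\Delta_{4\ell}(x)$.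
   Context: Let $\mathcal X\subseteq\mathbb R^d$ be closed and convex, $\|\cdot\|$ a norm on $\mathbb R^d$. The problem is $\min_{x\in\mathcal X}\Phi(x):=F(x)+r(x)$, with $F$ differentiable and $r:\mathbb R^d\to\mathbb R$ convex, proper, lower semicontinuous. A DGF is $\omega:\mathrm{cl}(\mathcal S)\to\mathbb R$, $\mathcal S$ open with $\mathrm{ri}(\mathcal X)\subseteq\mathcal S$, $\omega$ continuously differentiable on $\mathcal S$ and $1$-strongly convex w.r.t. $\|\cdot\|$ on $\mathrm{cl}(\mathcal S)$; $D_\omega(x,y)=\omega(x)-\omega(y)-\langle\nabla\omega(y),x-y\rangle$ and $D^{\mathrm{sym}}_\omega(x,y):=D_\omega(x,y)+D_\omega(y,x)$. For $\rho>0$ and $x\in\mathcal X\cap\mathcal S$: $\hat x:=\arg\min_{y\in\mathcal X}[\Phi(y)+\rho D_\omega(y,x)]$, $\Delta_\rho(x):=\rho^2D^{\mathrm{sym}}_\omega(\hat x,x)$ (Bregman proximal mapping); $x^+:=\arg\min_{y\in\mathcal X}[\langle\nabla F(x),y\rangle+r(y)+\rho D_\omega(y,x)]$, $\Delta^+_\rho(x):=\rho^2D^{\mathrm{sym}}_\omega(x^+,x)$ (Bregman gradient mapping); these minimizers are assumed to exist. $F$ is $(\ell,\omega)$-relatively smooth on $\mathcal X\cap\mathcal S$ if for all $x,y\in\mathcal X\cap\mathcal S$: $-\ell D_\omega(x,y)\le F(x)-F(y)-\langle\nabla F(y),x-y\rangle\le\ell D_\omega(x,y)$. *)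

theory Defs
  imports "HOL-Analysis.Analysis"
begin

text \<open>A norm on the (finite-dimensional) space 'a (arbitrary, not necessarily Euclidean).\<close>
definition is_norm :: "('a::real_vector \<Rightarrow> real) \<Rightarrow> bool" where
  "is_norm N \<longleftrightarrow> (\<forall>x. N x \<ge> 0) \<and> (\<forall>x. N x = 0 \<longleftrightarrow> x = 0)
     \<and> (\<forall>c x. N (c *\<^sub>R x) = \<bar>c\<bar> * N x) \<and> (\<forall>x y. N (x + y) \<le> N x + N y)"

definition lsc :: "('a::topological_space \<Rightarrow> real) \<Rightarrow> bool" where
  "lsc f \<longleftrightarrow> (\<forall>c. closed {x. f x \<le> c})"

definition strongly_convex_on :: "('a::real_vector \<Rightarrow> real) \<Rightarrow> 'a set \<Rightarrow> ('a \<Rightarrow> real) \<Rightarrow> bool" where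
  "strongly_convex_on N C w \<longleftrightarrow> convex C \<and>
     (\<forall>x\<in>C. \<forall>y\<in>C. \<forall>t\<in>{0..1}.
        w (t *\<^sub>R x + (1 - t) *\<^sub>R y) \<le> t * w x + (1 - t) * w y - t * (1 - t) / 2 * (N (x - y))\<^sup>2)"

definition is_DGF :: "('a::euclidean_space \<Rightarrow> real) \<Rightarrow> 'a set \<Rightarrow> 'a set \<Rightarrow> ('a \<Rightarrow> real) \<Rightarrow> ('a \<Rightarrow> 'a) \<Rightarrow> bool" where
  "is_DGF N X S w gw \<longleftrightarrow> open S \<and> rel_interior X \<subseteq> S
     \<and> (\<forall>x\<in>S. (w has_derivative (\<lambda>h. gw x \<bullet> h)) (at x)) \<and> continuous_on S gw
     \<and> strongly_convex_on N (closure S) w"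

definition Breg :: "('a::real_inner \<Rightarrow> real) \<Rightarrow> ('a \<Rightarrow> 'a) \<Rightarrow> 'a \<Rightarrow> 'a \<Rightarrow> real" where
  "Breg w gw x y = w x - w y - gw y \<bullet> (x - y)"

definition Bsym :: "('a::real_inner \<Rightarrow> real) \<Rightarrow> ('a \<Rightarrow> 'a) \<Rightarrow> 'a \<Rightarrow> 'a \<Rightarrow> real" where
  "Bsym w gw x y = Breg w gw x y + Breg w gw y x"

definition sqrt_Bsym_metric_on :: "('a::real_inner \<Rightarrow> real) \<Rightarrow> ('a \<Rightarrow> 'a) \<Rightarrow> 'a set \<Rightarrow> bool" where
  "sqrt_Bsym_metric_on w gw A \<longleftrightarrow>
     (\<forall>x\<in>A. \<forall>y\<in>A. Bsym w gw x y \<ge> 0)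
   \<and> (\<forall>x\<in>A. \<forall>y\<in>A. sqrt (Bsym w gw x y) = 0 \<longleftrightarrow> x = y)
   \<and> (\<forall>x\<in>A. \<forall>y\<in>A. sqrt (Bsym w gw x y) = sqrt (Bsym w gw y x))
   \<and> (\<forall>x\<in>A. \<forall>y\<in>A. \<forall>z\<in>A. sqrt (Bsym w gw x z) \<le> sqrt (Bsym w gw x y) + sqrt (Bsym w gw y z))"

definition rel_smooth :: "real \<Rightarrow> ('a::real_inner \<Rightarrow> real) \<Rightarrow> ('a \<Rightarrow> 'a) \<Rightarrow> ('a \<Rightarrow> real) \<Rightarrow> ('a \<Rightarrow> 'a) \<Rightarrow> 'a set \<Rightarrow> bool" where
  "rel_smooth l F gF w gw A \<longleftrightarrow> (\<forall>x\<in>A. \<forall>y\<in>A.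
      - l * Breg w gw x y \<le> F x - F y - gF y \<bullet> (x - y)
    \<and> F x - F y - gF y \<bullet> (x - y) \<le> l * Breg w gw x y)"

definition is_bprox :: "('a::real_inner \<Rightarrow> real) \<Rightarrow> ('a \<Rightarrow> real) \<Rightarrow> ('a \<Rightarrow> real) \<Rightarrow> ('a \<Rightarrow> 'a) \<Rightarrow> 'a set \<Rightarrow> real \<Rightarrow> 'a \<Rightarrow> 'a \<Rightarrow> bool" where
  "is_bprox F r w gw X \<rho> x xh \<longleftrightarrow> xh \<in> X \<and>
     (\<forall>y\<in>X. F xh + r xh + \<rho> * Breg w gw xh x \<le> F y + r y + \<rho> * Breg w gw y x)"

definition is_bgrad :: "('a::real_inner \<Rightarrow> 'a) \<Rightarrow> ('a \<Rightarrow> real) \<Rightarrow> ('a \<Rightarrow> real) \<Rightarrow> ('a \<Rightarrow> 'a) \<Rightarrow> 'a set \<Rightarrow> real \<Rightarrow> 'a \<Rightarrow> 'a \<Rightarrow> bool" where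
  "is_bgrad gF r w gw X \<rho> x xp \<longleftrightarrow> xp \<in> X \<and>
     (\<forall>y\<in>X. gF x \<bullet> xp + r xp + \<rho> * Breg w gw xp x \<le> gF x \<bullet> y + r y + \<rho> * Breg w gw y x)"

definition Cconst :: "real \<Rightarrow> real \<Rightarrow> real \<Rightarrow> real" where
  "Cconst l \<rho> s = ((1 + s) * (\<rho> - l) + (1 + 1 / s) * l) / (\<rho> - l - (1 + 1 / s) * l)"

end

theory Submission
  imports Defs
begin

(* Write xh for the Bregman proximal point and xp for the Bregman gradient point. Both satisfy
   a first-order optimality condition over X; they differ only in whether the gradient of F is
   taken at the point itself or at x. Adding the two conditions, the terms in r cancel and the
   mismatch of gradients is a combination of three linearisation errors of F, each bounded by
   relative smoothness, so that
     (rho - l) Dsym(xp, xh) <= l (Dsym(xp, x) + Dsym(xh, x)).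
   With a = sqrt Dsym(xp, x), b = sqrt Dsym(xh, x), c = sqrt Dsym(xp, xh), the triangle
   inequality a <= b + c and Young's inequality 2bc <= s b^2 + c^2/s then bound a^2 by C b^2,
   and symmetrically b^2 by C a^2. *)

definition lin_err :: "('a::real_inner \<Rightarrow> real) \<Rightarrow> ('a \<Rightarrow> 'a) \<Rightarrow> 'a \<Rightarrow> 'a \<Rightarrow> real" where
  "lin_err F gF p q = F p - F q - gF q \<bullet> (p - q)"

lemma Bsym_commute: "Bsym w gw x y = Bsym w gw y x"
  unfolding Bsym_def by simp

lemma Bsym_eq_inner: "Bsym w gw x y = (gw x - gw y) \<bullet> (x - y)"
  unfolding Bsym_def Breg_def by (simp add: inner_simps algebra_simps)

lemma Breg_has_derivative:
  assumes "(w has_derivative (\<lambda>h. gw z \<bullet> h)) (at z)"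
  shows "((\<lambda>y. Breg w gw y x) has_derivative (\<lambda>h. (gw z - gw x) \<bullet> h)) (at z)"
proof -
  have "((\<lambda>y. w y - w x - gw x \<bullet> (y - x)) has_derivative
      (\<lambda>h. gw z \<bullet> h - 0 - gw x \<bullet> (h - 0))) (at z)"
    using assms by (intro derivative_intros) auto
  then show ?thesis
    unfolding Breg_def by (simp add: inner_diff_left)
qed

lemma rel_smooth_lin_err_le_Bsym:
  assumes "rel_smooth l F gF w gw A" "p \<in> A" "q \<in> A"
  shows "\<bar>lin_err F gF p q\<bar> \<le> l * Bsym w gw p q"
proof -
  have "\<bar>lin_err F gF p q\<bar> \<le> l * Breg w gw p q"
    using assms unfolding rel_smooth_def lin_err_def by fastforce
  moreover have "\<bar>lin_err F gF q p\<bar> \<le> l * Breg w gw q p"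
    using assms unfolding rel_smooth_def lin_err_def by fastforce
  ultimately show ?thesis
    unfolding Bsym_def by (smt (verit) distrib_left)
qed

(* On the segment from m to y, convexity of r bounds the difference quotients of a from below
   by r m - r y; letting the step tend to 0 gives the claim. *)
lemma minimizer_variational_inequality:
  fixes a r :: "'a::real_inner \<Rightarrow> real"
  assumes X: "convex X" and m: "m \<in> X" and y: "y \<in> X" and r: "convex_on X r"
    and da: "(a has_derivative (\<lambda>h. g \<bullet> h)) (at m)"
    and min: "\<forall>z\<in>X. a m + r m \<le> a z + r z"
  shows "g \<bullet> (y - m) + r y - r m \<ge> 0"
proof -
  define d where "d = y - m"
  define \<phi> where "\<phi> t = a (m + t *\<^sub>R d)" for t :: real
  have "((\<lambda>t::real. m + t *\<^sub>R d) has_derivative (\<lambda>t. t *\<^sub>R d)) (at 0)"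
    by (auto intro!: derivative_eq_intros)
  moreover have "(a has_derivative (\<lambda>h. g \<bullet> h)) (at (m + 0 *\<^sub>R d))"
    using da by simp
  ultimately have "(\<phi> has_derivative (\<lambda>t. g \<bullet> (t *\<^sub>R d))) (at 0)"
    unfolding \<phi>_def by (rule has_derivative_compose)
  moreover have "(\<lambda>t. g \<bullet> (t *\<^sub>R d)) = (*) (g \<bullet> d)"
    by (simp add: fun_eq_iff)
  ultimately have "(\<phi> has_real_derivative g \<bullet> d) (at 0)"
    by (simp add: has_field_derivative_def)
  then have lim: "((\<lambda>t. (\<phi> (0 + t) - \<phi> 0) / t) \<longlongrightarrow> g \<bullet> d) (at_right 0)"
    unfolding DERIV_def filterlim_at_split by blast
  have "\<forall>\<^sub>F t in at_right 0. r m - r y \<le> (\<phi> (0 + t) - \<phi> 0) / t"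
    unfolding eventually_at_right_field
  proof (intro exI[of _ 1] conjI allI impI)
    fix t :: real assume t: "0 < t" "t < 1"
    have seg: "m + t *\<^sub>R d = (1 - t) *\<^sub>R m + t *\<^sub>R y"
      by (simp add: d_def algebra_simps)
    have "m + t *\<^sub>R d \<in> X"
      unfolding seg using X m y t by (simp add: convex_def)
    with min have "a m + r m \<le> \<phi> t + r (m + t *\<^sub>R d)"
      unfolding \<phi>_def by blast
    moreover have "r (m + t *\<^sub>R d) \<le> (1 - t) * r m + t * r y"
      unfolding seg using convex_onD[OF r, of t m y] m y t by simp
    ultimately have "t * (r m - r y) \<le> \<phi> t - \<phi> 0"
      unfolding \<phi>_def by (simp add: algebra_simps)
    then show "r m - r y \<le> (\<phi> (0 + t) - \<phi> 0) / t"
      using t by (simp add: field_simps)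
  qed simp
  from tendsto_lowerbound[OF lim this] have "r m - r y \<le> g \<bullet> d" by simp
  then show ?thesis
    unfolding d_def by simp
qed

lemma bprox_optimality:
  assumes X: "convex X" and r: "convex_on X r" and xh: "is_bprox F r w gw X \<rho> x xh"
    and F: "(F has_derivative (\<lambda>h. gF xh \<bullet> h)) (at xh)"
    and w: "(w has_derivative (\<lambda>h. gw xh \<bullet> h)) (at xh)"
    and y: "y \<in> X"
  shows "0 \<le> (gF xh + \<rho> *\<^sub>R (gw xh - gw x)) \<bullet> (y - xh) + r y - r xh"
proof -
  have "((\<lambda>z. F z + \<rho> * Breg w gw z x) has_derivative
      (\<lambda>h. gF xh \<bullet> h + \<rho> * ((gw xh - gw x) \<bullet> h))) (at xh)"
    using F Breg_has_derivative[of w gw, OF w] by (intro derivative_intros)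
  then have "((\<lambda>z. F z + \<rho> * Breg w gw z x) has_derivative
      (\<lambda>h. (gF xh + \<rho> *\<^sub>R (gw xh - gw x)) \<bullet> h)) (at xh)"
    by (simp add: inner_add_left)
  from minimizer_variational_inequality[OF X _ y r this] xh show ?thesis
    unfolding is_bprox_def by (simp add: algebra_simps)
qed

lemma bgrad_optimality:
  assumes X: "convex X" and r: "convex_on X r" and xp: "is_bgrad gF r w gw X \<rho> x xp"
    and w: "(w has_derivative (\<lambda>h. gw xp \<bullet> h)) (at xp)"
    and y: "y \<in> X"
  shows "0 \<le> (gF x + \<rho> *\<^sub>R (gw xp - gw x)) \<bullet> (y - xp) + r y - r xp"
proof -
  have "((\<lambda>z. gF x \<bullet> z + \<rho> * Breg w gw z x) has_derivative
      (\<lambda>h. gF x \<bullet> h + \<rho> * ((gw xp - gw x) \<bullet> h))) (at xp)"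
    using Breg_has_derivative[of w gw, OF w] by (intro derivative_intros)
  then have "((\<lambda>z. gF x \<bullet> z + \<rho> * Breg w gw z x) has_derivative
      (\<lambda>h. (gF x + \<rho> *\<^sub>R (gw xp - gw x)) \<bullet> h)) (at xp)"
    by (simp add: inner_add_left)
  from minimizer_variational_inequality[OF X _ y r this] xp show ?thesis
    unfolding is_bgrad_def by (simp add: algebra_simps)
qed

lemma bgrad_bprox_Bsym_le:
  assumes X: "convex X" and r: "convex_on X r"
    and F: "(F has_derivative (\<lambda>h. gF xh \<bullet> h)) (at xh)"
    and wh: "(w has_derivative (\<lambda>h. gw xh \<bullet> h)) (at xh)"
    and wp: "(w has_derivative (\<lambda>h. gw xp \<bullet> h)) (at xp)"
    and sm: "rel_smooth l F gF w gw A" and A: "x \<in> A" "xh \<in> A" "xp \<in> A"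
    and xh: "is_bprox F r w gw X \<rho> x xh" and xp: "is_bgrad gF r w gw X \<rho> x xp"
  shows "(\<rho> - l) * Bsym w gw xp xh \<le> l * (Bsym w gw xp x + Bsym w gw xh x)"
proof -
  have "xh \<in> X" "xp \<in> X"
    using xh xp unfolding is_bprox_def is_bgrad_def by auto
  from bprox_optimality[where gF = gF and gw = gw, OF X r xh F wh \<open>xp \<in> X\<close>]
    and bgrad_optimality[where gw = gw, OF X r xp wp \<open>xh \<in> X\<close>]
  have "\<rho> * Bsym w gw xp xh \<le> (gF xh - gF x) \<bullet> (xp - xh)"
    unfolding Bsym_eq_inner by (simp add: inner_simps algebra_simps)
  also have "\<dots> = lin_err F gF xp x - lin_err F gF xp xh - lin_err F gF xh x"
    unfolding lin_err_def by (simp add: inner_simps algebra_simps)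
  also have "\<dots> \<le> l * Bsym w gw xp x + l * Bsym w gw xp xh + l * Bsym w gw xh x"
    using rel_smooth_lin_err_le_Bsym[OF sm] A by (smt (verit))
  finally show ?thesis
    by (simp add: algebra_simps)
qed

lemma triangle_sq_bound:
  fixes a b c l \<rho> s :: real
  assumes "0 \<le> a" "0 \<le> b" "0 \<le> c" "a \<le> b + c" "(\<rho> - l) * c\<^sup>2 \<le> l * (a\<^sup>2 + b\<^sup>2)"
    and "0 < s" "l < \<rho>"
  shows "a\<^sup>2 * (\<rho> - l - (1 + 1 / s) * l) \<le> b\<^sup>2 * ((1 + s) * (\<rho> - l) + (1 + 1 / s) * l)"
proof -
  have young: "2 * b * c \<le> s * b\<^sup>2 + c\<^sup>2 / s"
  proof -
    have "0 \<le> (s * b - c)\<^sup>2 / s"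
      using \<open>0 < s\<close> by simp
    also have "\<dots> = s * b\<^sup>2 + c\<^sup>2 / s - 2 * b * c"
      using \<open>0 < s\<close> by (simp add: field_simps power2_eq_square)
    finally show ?thesis by simp
  qed
  have "a\<^sup>2 \<le> (b + c)\<^sup>2"
    using assms by (simp add: power_mono)
  with young have "a\<^sup>2 \<le> (1 + s) * b\<^sup>2 + (1 + 1 / s) * c\<^sup>2"
    by (simp add: power2_eq_square field_simps)
  then have "(\<rho> - l) * a\<^sup>2 \<le> (\<rho> - l) * ((1 + s) * b\<^sup>2 + (1 + 1 / s) * c\<^sup>2)"
    using \<open>l < \<rho>\<close> by (simp add: mult_left_mono)
  also have "\<dots> = (1 + s) * (\<rho> - l) * b\<^sup>2 + (1 + 1 / s) * ((\<rho> - l) * c\<^sup>2)"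
    by (simp add: algebra_simps diff_divide_distrib)
  also have "\<dots> \<le> (1 + s) * (\<rho> - l) * b\<^sup>2 + (1 + 1 / s) * (l * (a\<^sup>2 + b\<^sup>2))"
    using assms by (intro add_left_mono mult_left_mono) auto
  finally show ?thesis
    by (simp add: algebra_simps)
qed

lemma ratio_bounds_of_cross_bounds:
  fixes A B N D :: real
  assumes "0 \<le> A" "0 \<le> B" "0 < D" "A * D \<le> B * N" "B * D \<le> A * N"
  shows "B / (N / D) \<le> A \<and> A \<le> N / D * B"
proof (cases "N \<le> 0")
  case True
  with assms have "A = 0" "B = 0"
    by (smt (verit) mult_nonneg_nonpos zero_less_mult_iff)+
  then show ?thesis by simp
next
  case False
  with assms show ?thesis
    by (simp add: field_simps)
qed

lemma Cconst_ratio_bounds: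
  fixes a b c l \<rho> s :: real
  assumes "0 \<le> a" "0 \<le> b" "0 \<le> c" "a \<le> b + c" "b \<le> a + c"
    and "(\<rho> - l) * c\<^sup>2 \<le> l * (a\<^sup>2 + b\<^sup>2)"
    and "0 < \<rho>" "0 < s" "l / s + 2 * l < \<rho>"
  shows "b\<^sup>2 / Cconst l \<rho> s \<le> a\<^sup>2 \<and> a\<^sup>2 \<le> Cconst l \<rho> s * b\<^sup>2"
proof -
  have "l < \<rho>"
  proof (cases "l < 0")
    case False
    with assms have "0 \<le> l / s" by simp
    with assms False show ?thesis by linarith
  qed (use assms in simp)
  moreover have "0 < \<rho> - l - (1 + 1 / s) * l"
    using assms by (simp add: algebra_simps)
  moreover have "(\<rho> - l) * c\<^sup>2 \<le> l * (b\<^sup>2 + a\<^sup>2)"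
    using assms by (simp add: add.commute)
  ultimately show ?thesis
    unfolding Cconst_def using assms
    by (intro ratio_bounds_of_cross_bounds triangle_sq_bound) auto
qed

lemma sqrt_Bsym_metric_onD:
  assumes "sqrt_Bsym_metric_on w gw A" "x \<in> A" "y \<in> A"
  shows "0 \<le> Bsym w gw x y"
    and "z \<in> A \<Longrightarrow> sqrt (Bsym w gw x z) \<le> sqrt (Bsym w gw x y) + sqrt (Bsym w gw y z)"
  using assms unfolding sqrt_Bsym_metric_on_def by simp_all

lemma bgrad_bprox_Bsym_ratio:
  assumes X: "convex X" and r: "convex_on X r"
    and F: "(F has_derivative (\<lambda>h. gF xh \<bullet> h)) (at xh)"
    and w: "\<forall>z\<in>A. (w has_derivative (\<lambda>h. gw z \<bullet> h)) (at z)"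
    and sm: "rel_smooth l F gF w gw A" and met: "sqrt_Bsym_metric_on w gw A"
    and A: "x \<in> A" "xh \<in> A" "xp \<in> A"
    and xh: "is_bprox F r w gw X \<rho> x xh" and xp: "is_bgrad gF r w gw X \<rho> x xp"
    and \<rho>s: "0 < \<rho>" "0 < s" "l / s + 2 * l < \<rho>"
  shows "\<rho>\<^sup>2 * Bsym w gw xh x / Cconst l \<rho> s \<le> \<rho>\<^sup>2 * Bsym w gw xp x
    \<and> \<rho>\<^sup>2 * Bsym w gw xp x \<le> Cconst l \<rho> s * (\<rho>\<^sup>2 * Bsym w gw xh x)"
proof -
  define a b c where "a = sqrt (Bsym w gw xp x)" and "b = sqrt (Bsym w gw xh x)"
    and "c = sqrt (Bsym w gw xp xh)"
  have nonneg: "0 \<le> Bsym w gw xp x" "0 \<le> Bsym w gw xh x" "0 \<le> Bsym w gw xp xh"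
    using sqrt_Bsym_metric_onD(1)[OF met] A by simp_all
  then have sq: "a\<^sup>2 = Bsym w gw xp x" "b\<^sup>2 = Bsym w gw xh x" "c\<^sup>2 = Bsym w gw xp xh"
    unfolding a_def b_def c_def by simp_all
  have "0 \<le> a" "0 \<le> b" "0 \<le> c"
    unfolding a_def b_def c_def using nonneg by simp_all
  moreover have "a \<le> b + c"
    using sqrt_Bsym_metric_onD(2)[OF met A(3,2,1)] unfolding a_def b_def c_def by simp
  moreover have "b \<le> a + c"
    using sqrt_Bsym_metric_onD(2)[OF met A(2,3,1)]
    unfolding a_def b_def c_def Bsym_commute[of w gw xh xp] by simp
  moreover have "(\<rho> - l) * c\<^sup>2 \<le> l * (a\<^sup>2 + b\<^sup>2)"
    unfolding sq
    using bgrad_bprox_Bsym_le[where gw = gw, OF X r F w[rule_format] w[rule_format] sm A xh xp] A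
    by simp
  ultimately have "b\<^sup>2 / Cconst l \<rho> s \<le> a\<^sup>2 \<and> a\<^sup>2 \<le> Cconst l \<rho> s * b\<^sup>2"
    using Cconst_ratio_bounds \<rho>s by blast
  then have "\<rho>\<^sup>2 * (b\<^sup>2 / Cconst l \<rho> s) \<le> \<rho>\<^sup>2 * a\<^sup>2"
    and "\<rho>\<^sup>2 * a\<^sup>2 \<le> \<rho>\<^sup>2 * (Cconst l \<rho> s * b\<^sup>2)"
    by (intro mult_left_mono; simp)+
  then show ?thesis
    unfolding sq by (simp add: mult.left_commute)
qed

theorem lemma1:
  fixes X S :: "'a::euclidean_space set"
    and N :: "'a \<Rightarrow> real"
    and F r w :: "'a \<Rightarrow> real"
    and gF gw :: "'a \<Rightarrow> 'a"
    and l :: real and x :: 'a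
  assumes X: "closed X" "convex X"
    and N: "is_norm N"
    and F: "\<forall>z. (F has_derivative (\<lambda>h. gF z \<bullet> h)) (at z)"
    and r: "convex_on UNIV r" "lsc r"
    and w: "is_DGF N X S w gw"
    and sm: "rel_smooth l F gF w gw (X \<inter> S)"
    and met: "sqrt_Bsym_metric_on w gw (X \<inter> S)"
    and x: "x \<in> X \<inter> S"
  shows "(\<forall>\<rho> s xh xp. \<rho> > 0 \<and> s > 0 \<and> \<rho> > l / s + 2 * l
            \<and> xh \<in> S \<and> is_bprox F r w gw X \<rho> x xh
            \<and> xp \<in> S \<and> is_bgrad gF r w gw X \<rho> x xp
          \<longrightarrow> \<rho>\<^sup>2 * Bsym w gw xh x / Cconst l \<rho> s \<le> \<rho>\<^sup>2 * Bsym w gw xp x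
            \<and> \<rho>\<^sup>2 * Bsym w gw xp x \<le> Cconst l \<rho> s * (\<rho>\<^sup>2 * Bsym w gw xh x))
       \<and> (l > 0 \<longrightarrow> Cconst l (4 * l) 1 = 8
            \<and> (\<forall>xh xp. xh \<in> S \<and> is_bprox F r w gw X (4 * l) x xh
                 \<and> xp \<in> S \<and> is_bgrad gF r w gw X (4 * l) x xp
               \<longrightarrow> (1 / 8) * ((4 * l)\<^sup>2 * Bsym w gw xh x) \<le> (4 * l)\<^sup>2 * Bsym w gw xp x
                 \<and> (4 * l)\<^sup>2 * Bsym w gw xp x \<le> 8 * ((4 * l)\<^sup>2 * Bsym w gw xh x)))"
proof -
  have rX: "convex_on X r"
    using convex_on_subset[OF r(1) subset_UNIV X(2)] .
  have wS: "\<forall>z\<in>X \<inter> S. (w has_derivative (\<lambda>h. gw z \<bullet> h)) (at z)"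
    using w unfolding is_DGF_def by blast
  have ratio: "\<rho>\<^sup>2 * Bsym w gw xh x / Cconst l \<rho> s \<le> \<rho>\<^sup>2 * Bsym w gw xp x
      \<and> \<rho>\<^sup>2 * Bsym w gw xp x \<le> Cconst l \<rho> s * (\<rho>\<^sup>2 * Bsym w gw xh x)"
    if "0 < \<rho>" "0 < s" "l / s + 2 * l < \<rho>" "xh \<in> S" "is_bprox F r w gw X \<rho> x xh"
      "xp \<in> S" "is_bgrad gF r w gw X \<rho> x xp" for \<rho> s xh xp
    using bgrad_bprox_Bsym_ratio[OF X(2) rX F[rule_format] wS sm met x _ _ that(5,7,1-3)] that
    unfolding is_bprox_def is_bgrad_def by blast
  have C8: "Cconst l (4 * l) 1 = 8" if "0 < l"
    unfolding Cconst_def using that by (simp add: field_simps)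
  show ?thesis
    using ratio[of "4 * l" 1] C8
    by (intro conjI allI impI) (blast intro: ratio[THEN conjunct1] ratio[THEN conjunct2] | auto)+
qed

end
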